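(* Let $\mathcal{X}\subset\mathbb{R}^n$ be a $\mathcal{C}^1$ smooth submanifold of dimension $d$ and $S:\mathcal{X}\rightrightarrows\mathbb{R}^m$ a set-valued map whose graph is locally closed at $(\bar x,\bar y)\in\operatorname{Graph}(S)$. Define $H:\mathbb{R}^m\rightrightarrows\mathbb{R}^n$ by $H(y^* )=D^*S(\bar x\mid\bar y)(y^* )\cap T_{\mathcal{X}}(\bar x)$. If $H(0_m)=\{0_n\}$, equivalently $N_{\operatorname{Graph}(S)}(\bar x,\bar y)\cap(T_{\mathcal{X}}(\bar x)\times\{0_m\})=\{0_{n+m}\}$, then $S$ has the Aubin property at $\bar x$ for $\bar y$ relative to $\mathcal{X}$, and $$\operatorname{lip}_{\mathcal{X}}S(\bar x\mid\bar y)=|H|^+=\sup\Big\{\tfrac{|u|}{|v|}:(u,v)\in N_{\operatorname{Graph}(S)}(\bar x,\bar y)\cap(T_{\mathcal{X}}(\bar x)\times\mathbb{R}^m)\Big\}.$$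
   Context: For a closed set $D\subset\mathbb{R}^N$ and $\bar z\in D$, the Hadamard (regular) normal cone is $\hat N_D(\bar z)=\{v:\langle v,z-\bar z\rangle\le o(|z-\bar z|)\text{ for }z\in D\}$, and the limiting normal cone $N_D(\bar z)$ is the set of limits $v=\lim v_i$ with $v_i\in\hat N_D(z_i)$, $z_i\in D$, $z_i\to\bar z$ (for locally closed sets, computed locally). $T_{\mathcal{X}}(\bar x)$ is the tangent space of the manifold $\mathcal{X}$ at $\bar x$. The coderivative is $D^*S(\bar x\mid\bar y)(y^* )=\{x^*:(x^*,-y^* )\in N_{\operatorname{Graph}(S)}(\bar x,\bar y)\}$. The outer norm of a positively homogeneous map $H$ is $|H|^+=\sup\{|z|/|w|:(w,z)\in\operatorname{Graph}(H)\}$. $S$ has the Aubin property relative to $X$ at $\bar x\in X$ for $\bar y\in S(\bar x)$ if $\operatorname{Graph}(S)$ is locally closed at $(\bar x,\bar y)$ and there are neighborhoods $V$ of $\bar x$, $W$ of $\bar y$ and $\kappa\ge0$ with $S(x')\cap W\subset S(x)+\kappa|x'-x|\mathbb{B}$ for all $x,x'\in X\cap V$ ($\mathbb{B}$ the closed unit ball). The graphical modulus $\operatorname{lip}_X S(\bar x\mid\bar y)$ is the infimum of all such $\kappa$ (over all such $V,W$). *)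

theory Defs
  imports "HOL-Analysis.Analysis"
begin

text \<open>X is a C^1 submanifold of dimension d of the Euclidean space 'a: around every point
  of X it is the zero set of a C^1 map F into a (d'-codimensional) linear subspace W
  (a copy of R^(n-d)) whose derivative at the point is onto W.\<close>
definition C1_submanifold :: "'a::euclidean_space set \<Rightarrow> nat \<Rightarrow> bool" where
  "C1_submanifold X d \<longleftrightarrow> d \<le> DIM('a) \<and>
     (\<forall>x\<in>X. \<exists>U W (F :: 'a \<Rightarrow> 'a) (F' :: 'a \<Rightarrow> 'a \<Rightarrow>\<^sub>L 'a). open U \<and> x \<in> U \<and> subspace W \<and> dim W = DIM('a) - d \<and>
        (\<forall>z\<in>U. (F has_derivative blinfun_apply (F' z)) (at z)) \<and>
        continuous_on U F' \<and> F ` U \<subseteq> W \<and> range (blinfun_apply (F' x)) = W \<and>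
        X \<inter> U = {z\<in>U. F z = 0})"

definition tangent_space :: "'a::euclidean_space set \<Rightarrow> 'a \<Rightarrow> 'a set" where
  "tangent_space X x = {v. \<exists>\<gamma> e. e > 0 \<and> \<gamma> 0 = x \<and> (\<forall>t. \<bar>t\<bar> < e \<longrightarrow> \<gamma> t \<in> X) \<and>
        (\<gamma> has_vector_derivative v) (at 0)}"

definition regular_normal_cone :: "'a::euclidean_space set \<Rightarrow> 'a \<Rightarrow> 'a set" where
  "regular_normal_cone D z0 = {v. \<forall>\<epsilon>>0. \<exists>\<delta>>0. \<forall>z\<in>D. norm (z - z0) < \<delta> \<longrightarrow>
        inner v (z - z0) \<le> \<epsilon> * norm (z - z0)}"

definition limiting_normal_cone :: "'a::euclidean_space set \<Rightarrow> 'a \<Rightarrow> 'a set" where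
  "limiting_normal_cone D z0 = {v. \<exists>z vs. (\<forall>i. z i \<in> D \<and> vs i \<in> regular_normal_cone D (z i)) \<and>
        z \<longlonglongrightarrow> z0 \<and> vs \<longlonglongrightarrow> v}"

definition locally_closed_at :: "'a::metric_space set \<Rightarrow> 'a \<Rightarrow> bool" where
  "locally_closed_at D z0 \<longleftrightarrow> (\<exists>\<epsilon>>0. closed (D \<inter> cball z0 \<epsilon>))"

definition graph :: "('a \<Rightarrow> 'b set) \<Rightarrow> ('a \<times> 'b) set" where
  "graph S = {(x, y). y \<in> S x}"

definition coderivative ::
  "('a::euclidean_space \<Rightarrow> 'b::euclidean_space set) \<Rightarrow> 'a \<Rightarrow> 'b \<Rightarrow> 'b \<Rightarrow> 'a set" where
  "coderivative S x0 y0 ystar = {xstar. (xstar, - ystar) \<in> limiting_normal_cone (graph S) (x0, y0)}"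

definition ratio_val :: "real \<Rightarrow> real \<Rightarrow> ereal" where
  "ratio_val num den = (if den = 0 then (if num = 0 then 0 else \<infinity>) else ereal (num / den))"

definition outer_norm :: "('a::real_normed_vector \<Rightarrow> 'b::real_normed_vector set) \<Rightarrow> ereal" where
  "outer_norm H = Sup {ratio_val (norm z) (norm w) | w z. (w, z) \<in> graph H}"

definition aubin_inclusion ::
  "('a::metric_space \<Rightarrow> 'b::metric_space set) \<Rightarrow> 'a set \<Rightarrow> 'a set \<Rightarrow> 'b set \<Rightarrow> real \<Rightarrow> bool" where
  "aubin_inclusion S X V W \<kappa> \<longleftrightarrow>
     (\<forall>x\<in>X \<inter> V. \<forall>x'\<in>X \<inter> V. \<forall>y\<in>S x' \<inter> W. \<exists>y'\<in>S x. dist y y' \<le> \<kappa> * dist x' x)"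

definition aubin_rel ::
  "('a::metric_space \<Rightarrow> 'b::metric_space set) \<Rightarrow> 'a set \<Rightarrow> 'a \<Rightarrow> 'b \<Rightarrow> bool" where
  "aubin_rel S X x0 y0 \<longleftrightarrow> x0 \<in> X \<and> y0 \<in> S x0 \<and> locally_closed_at (graph S) (x0, y0) \<and>
     (\<exists>V W \<kappa>. open V \<and> x0 \<in> V \<and> open W \<and> y0 \<in> W \<and> \<kappa> \<ge> 0 \<and> aubin_inclusion S X V W \<kappa>)"

definition graphical_modulus ::
  "('a::metric_space \<Rightarrow> 'b::metric_space set) \<Rightarrow> 'a set \<Rightarrow> 'a \<Rightarrow> 'b \<Rightarrow> ereal" where
  "graphical_modulus S X x0 y0 = Inf {ereal \<kappa> | \<kappa>. \<kappa> \<ge> 0 \<and>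
     (\<exists>V W. open V \<and> x0 \<in> V \<and> open W \<and> y0 \<in> W \<and> aubin_inclusion S X V W \<kappa>)}"

end

theory Submission
  imports Defs
begin

text \<open>
  The proof has three parts.
  (1) Geometry of X: T consists of all limits of normalised chords of X near x0, and every unit
      vector of T is uniformly attainable as a chord direction near x0. Both follow from a
      flattening chart built with the inverse function theorem.
  (2) Sufficiency: if the Aubin inclusion with constant K fails near (x0, y0), minimising a
      penalty over the compact part of the graph produces regular normals (sgn(p - q), v) with
      p, q in X and |v| \<le> 1/\<kappa> for any \<kappa> < K; by compactness and (1) they converge to a
      limiting normal (e, v0) with e a unit vector of T.
  (3) Necessity: an Aubin inclusion with constant \<kappa> forces |u| \<le> \<kappa>|v| for (u, v) in N with
      u in T, by testing approximating regular normals against graph points that follow chords of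
      X in the direction of u.
  The main theorem combines (2) and (3) through an order-theoretic identity between the infimum
  of admissible constants and the supremum of the ratios.
\<close>

lemma continuous_derivative_strict:
  fixes f :: "'a::euclidean_space \<Rightarrow> 'b::euclidean_space"
  assumes U: "open U" "x0 \<in> U" and der: "\<forall>z\<in>U. (f has_derivative blinfun_apply (f' z)) (at z)"
    and cont: "continuous_on U f'" and eta: "\<eta> > 0"
  shows "\<exists>\<rho>>0. ball x0 \<rho> \<subseteq> U \<and> (\<forall>p\<in>ball x0 \<rho>. \<forall>q\<in>ball x0 \<rho>.
           norm (f p - f q - blinfun_apply (f' x0) (p - q)) \<le> \<eta> * norm (p - q))"
proof -
  obtain \<rho>1 where r1: "\<rho>1 > 0" "\<forall>z\<in>U. dist z x0 < \<rho>1 \<longrightarrow> dist (f' z) (f' x0) < \<eta>"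
    using cont U(2) eta unfolding continuous_on_iff by blast
  obtain \<rho>2 where r2: "\<rho>2 > 0" "ball x0 \<rho>2 \<subseteq> U"
    using U open_contains_ball by blast
  define \<rho> where "\<rho> = min \<rho>1 \<rho>2"
  have rp: "\<rho> > 0" using r1 r2 by (simp add: \<rho>_def)
  have sub: "ball x0 \<rho> \<subseteq> U" using r2 by (auto simp: \<rho>_def)
  have "norm (f p - f q - blinfun_apply (f' x0) (p - q)) \<le> norm (p - q) * \<eta>"
    if p: "p \<in> ball x0 \<rho>" and q: "q \<in> ball x0 \<rho>" for p q
  proof (rule differentiable_bound_linearization[where S="ball x0 \<rho>" and f'="\<lambda>z. blinfun_apply (f' z)"])
    show "q + t *\<^sub>R (p - q) \<in> ball x0 \<rho>" if "t \<in> {0..1}" for t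
    proof -
      have "(1 - t) *\<^sub>R q + t *\<^sub>R p \<in> ball x0 \<rho>"
        using that p q by (intro convexD[OF convex_ball]) auto
      moreover have "(1 - t) *\<^sub>R q + t *\<^sub>R p = q + t *\<^sub>R (p - q)"
        by (simp add: algebra_simps)
      ultimately show ?thesis by simp
    qed
    show "(f has_derivative blinfun_apply (f' z)) (at z within ball x0 \<rho>)" if "z \<in> ball x0 \<rho>" for z
      using der sub that has_derivative_at_withinI by blast
    show "onorm (blinfun_apply (f' z) - blinfun_apply (f' x0)) \<le> \<eta>" if "z \<in> ball x0 \<rho>" for z
    proof -
      have "z \<in> U" "dist z x0 < \<rho>1" using that sub by (auto simp: \<rho>_def dist_commute)
      then have "norm (f' z - f' x0) \<le> \<eta>" using r1 by (simp add: dist_norm less_imp_le)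
      moreover have "blinfun_apply (f' z) - blinfun_apply (f' x0) = blinfun_apply (f' z - f' x0)"
        by (simp add: fun_diff_def blinfun.diff_left minus_blinfun.rep_eq)
      ultimately show ?thesis by (simp add: norm_blinfun.rep_eq)
    qed
    show "x0 \<in> ball x0 \<rho>" using rp by simp
  qed
  then show ?thesis using rp sub by (metis mult.commute)
qed

lemma sgn_approx:
  fixes \<Delta> w :: "'a::real_normed_vector"
  assumes "\<Delta> \<noteq> 0" "norm w = 1" "t \<ge> 0" "norm (t *\<^sub>R w - \<Delta>) \<le> c * norm \<Delta>"
  shows "norm (sgn \<Delta> - w) \<le> 2 * c"
proof -
  define D where "D = norm \<Delta>"
  have Dp: "D > 0" using assms(1) by (simp add: D_def)
  have e1: "sgn \<Delta> - w = (1/D) *\<^sub>R (\<Delta> - D *\<^sub>R w)"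
    using Dp by (simp add: sgn_div_norm D_def algebra_simps divide_inverse_commute)
  have "\<bar>t - D\<bar> = \<bar>norm (t *\<^sub>R w) - norm \<Delta>\<bar>" using assms(2,3) by (simp add: D_def)
  also have "\<dots> \<le> norm (t *\<^sub>R w - \<Delta>)" by (rule norm_triangle_ineq3)
  finally have tD: "\<bar>t - D\<bar> \<le> norm (t *\<^sub>R w - \<Delta>)" .
  have "norm (\<Delta> - D *\<^sub>R w) \<le> norm (\<Delta> - t *\<^sub>R w) + norm (t *\<^sub>R w - D *\<^sub>R w)"
    by (rule norm_diff_triangle_le[of _ "t *\<^sub>R w"]) simp_all
  also have "norm (t *\<^sub>R w - D *\<^sub>R w) = \<bar>t - D\<bar>"
    using assms(2) by (simp add: scaleR_diff_left[symmetric])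
  also have "norm (\<Delta> - t *\<^sub>R w) = norm (t *\<^sub>R w - \<Delta>)" by (simp add: norm_minus_commute)
  finally have "norm (\<Delta> - D *\<^sub>R w) \<le> 2 * c * D" using tD assms(4) by (simp add: D_def)
  then have "(1/D) * norm (\<Delta> - D *\<^sub>R w) \<le> (1/D) * (2 * c * D)" using Dp by (intro mult_left_mono) auto
  then show ?thesis using Dp by (simp add: e1)
qed

text \<open>Tangent-line bound for the concave square root, in the form of a second-order expansion
  of sqrt(c^2 + 2 I + N).\<close>
lemma sqrt_expansion_upper:
  fixes c I N :: real
  assumes "c > 0" and "Q \<ge> 0" and "Q = c^2 + 2 * I + N"
  shows "sqrt Q \<le> c + I / c + N / (2 * c)"
proof -
  have "(sqrt Q)^2 = Q" using assms(2) by simp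
  then have "(sqrt Q - c) * (2 * c) = Q - c^2 - (sqrt Q - c)^2"
    by (simp add: power2_eq_square algebra_simps)
  then have "(sqrt Q - c) * (2 * c) \<le> Q - c^2" by simp
  then have "sqrt Q - c \<le> (Q - c^2) / (2 * c)" using assms(1) by (simp add: pos_le_divide_eq)
  also have "\<dots> = I / c + N / (2 * c)" using assms(1,3) by (simp add: field_simps)
  finally show ?thesis by simp
qed

lemma norm_add_sq: "(norm (x + y))^2 = (norm x)^2 + 2 * inner x y + (norm (y::'a::real_inner))^2"
  using dot_norm[of x y] by simp

lemma dist_pair_le:
  fixes a c :: "'a::real_normed_vector" and b d :: "'b::real_normed_vector"
  shows "dist (a, b) (c, d) \<le> dist a c + dist b d"
  using norm_Pair_le[of "a - c" "b - d"] by (simp add: dist_norm)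

lemma LIMSEQ_dist_inverse_Suc:
  fixes f :: "nat \<Rightarrow> 'a::metric_space"
  assumes "\<forall>j. dist (f j) a < 1 / Suc j"
  shows "f \<longlonglongrightarrow> a"
proof (rule metric_LIMSEQ_I)
  fix r :: real assume "r > 0"
  then obtain n where n: "inverse (real (Suc n)) < r" using reals_Archimedean by blast
  have "dist (f j) a < r" if "j \<ge> n" for j
  proof -
    have "1 / real (Suc j) \<le> inverse (real (Suc n))" using that by (simp add: inverse_eq_divide frac_le)
    moreover have "dist (f j) a < 1 / real (Suc j)" using assms by blast
    ultimately show ?thesis using n by linarith
  qed
  then show "\<exists>no. \<forall>j\<ge>no. dist (f j) a < r" by blast
qed

section \<open>First-order geometry of a C^1 submanifold\<close>

definition chords_tangent :: "'a::real_normed_vector set \<Rightarrow> 'a \<Rightarrow> 'a set \<Rightarrow> bool" where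
  "chords_tangent X x0 T \<longleftrightarrow> (\<forall>p q :: nat \<Rightarrow> 'a. \<forall>e. (\<forall>j. p j \<in> X \<and> q j \<in> X \<and> p j \<noteq> q j) \<longrightarrow>
     p \<longlonglongrightarrow> x0 \<longrightarrow> q \<longlonglongrightarrow> x0 \<longrightarrow> (\<lambda>j. sgn (p j - q j)) \<longlonglongrightarrow> e \<longrightarrow> e \<in> T)"

definition directions_attainable :: "'a::real_normed_vector set \<Rightarrow> 'a \<Rightarrow> 'a \<Rightarrow> bool" where
  "directions_attainable X x0 w \<longleftrightarrow> (\<forall>\<epsilon>>0. \<exists>\<rho>>0. \<forall>x'\<in>X. dist x' x0 < \<rho> \<longrightarrow>
     (\<forall>r>0. \<exists>\<xi>\<in>X. \<xi> \<noteq> x' \<and> dist \<xi> x' < r \<and> norm (sgn (\<xi> - x') - w) \<le> \<epsilon>))"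

lemma zero_set_tangent_subset_kernel:
  fixes F :: "'a::euclidean_space \<Rightarrow> 'b::real_normed_vector"
  assumes U: "open U" "x0 \<in> U" and zeros: "X \<inter> U = {z\<in>U. F z = 0}"
    and dF: "(F has_derivative A) (at x0)"
  shows "tangent_space X x0 \<subseteq> {v. A v = 0}"
proof
  fix v assume "v \<in> tangent_space X x0"
  then obtain \<gamma> e where ge: "e > 0" "\<gamma> 0 = x0" "\<forall>t. \<bar>t\<bar> < e \<longrightarrow> \<gamma> t \<in> X"
      "(\<gamma> has_vector_derivative v) (at 0)"
    unfolding tangent_space_def by blast
  have dg: "(\<gamma> has_derivative (\<lambda>t. t *\<^sub>R v)) (at 0)"
    using ge(4) by (simp add: has_vector_derivative_def)
  obtain e2 where e2: "e2 > 0" "\<forall>t. dist t 0 < e2 \<longrightarrow> \<gamma> t \<in> U"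
  proof -
    obtain r where r: "r > 0" "ball x0 r \<subseteq> U" using U open_contains_ball by blast
    have "isCont \<gamma> 0" using dg has_derivative_continuous by blast
    then obtain e2 where "e2 > 0" "\<forall>t. dist t 0 < e2 \<longrightarrow> dist (\<gamma> t) (\<gamma> 0) < r"
      using r(1) unfolding continuous_at_eps_delta by blast
    then show ?thesis using that r ge(2) by (auto simp: dist_commute subset_iff)
  qed
  have "((F \<circ> \<gamma>) has_derivative (A \<circ> (\<lambda>t. t *\<^sub>R v))) (at 0)"
    using dF ge(2) by (intro diff_chain_at[OF dg]) simp
  moreover have "((F \<circ> \<gamma>) has_derivative (\<lambda>t. 0)) (at 0)"
  \<comment> \<open>F vanishes identically along the curve near 0\<close>
  proof (rule has_derivative_transform_within[where d="min e e2"])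
    show "((\<lambda>t::real. 0) has_derivative (\<lambda>t. 0)) (at 0 within UNIV)" by simp
    show "0 < min e e2" using ge e2 by simp
    fix t :: real assume "t \<in> UNIV" "dist t 0 < min e e2"
    then have "\<gamma> t \<in> U" "\<gamma> t \<in> X" using e2 ge(3) by auto
    then show "0 = (F \<circ> \<gamma>) t" using zeros by auto
  qed simp
  ultimately have "A \<circ> (\<lambda>t. t *\<^sub>R v) = (\<lambda>t. 0)" by (rule has_derivative_unique)
  then have "A (1 *\<^sub>R v) = 0" by (metis comp_apply)
  then show "v \<in> {v. A v = 0}" by simp
qed

lemma zero_set_chord_estimate:
  assumes zeros: "X \<inter> U = {z\<in>U. F z = 0}" and ball: "ball x0 \<rho> \<subseteq> U"
    and strict: "\<forall>p\<in>ball x0 \<rho>. \<forall>q\<in>ball x0 \<rho>. norm (F p - F q - A (p - q)) \<le> \<eta> * norm (p - q)"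
  shows "\<forall>p\<in>X. \<forall>q\<in>X. dist p x0 < \<rho> \<longrightarrow> dist q x0 < \<rho> \<longrightarrow> norm (A (p - q)) \<le> \<eta> * norm (p - q)"
proof (intro ballI impI)
  fix p q assume pq: "p \<in> X" "q \<in> X" "dist p x0 < \<rho>" "dist q x0 < \<rho>"
  then have pq_ball: "p \<in> ball x0 \<rho>" "q \<in> ball x0 \<rho>" by (auto simp: dist_commute)
  then have "F p = 0" "F q = 0" using zeros pq ball by auto
  then show "norm (A (p - q)) \<le> \<eta> * norm (p - q)" using strict pq_ball by fastforce
qed

lemma kernel_chords_tangent:
  fixes A :: "'a::euclidean_space \<Rightarrow> 'b::euclidean_space"
  assumes linA: "linear A"
    and chord: "\<forall>\<eta>>0. \<exists>\<rho>>0. \<forall>p\<in>X. \<forall>q\<in>X. dist p x0 < \<rho> \<longrightarrow> dist q x0 < \<rho> \<longrightarrow>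
        norm (A (p - q)) \<le> \<eta> * norm (p - q)"
  shows "chords_tangent X x0 {v. A v = 0}"
  unfolding chords_tangent_def
proof (intro allI impI)
  fix p q :: "nat \<Rightarrow> _" and e
  assume pq: "\<forall>j. p j \<in> X \<and> q j \<in> X \<and> p j \<noteq> q j" and pl: "p \<longlonglongrightarrow> x0" and ql: "q \<longlonglongrightarrow> x0"
    and el: "(\<lambda>j. sgn (p j - q j)) \<longlonglongrightarrow> e"
  have "bounded_linear A" using linA by (simp add: linear_conv_bounded_linear)
  then have Al: "(\<lambda>j. norm (A (sgn (p j - q j)))) \<longlonglongrightarrow> norm (A e)"
    by (intro tendsto_norm bounded_linear.tendsto[OF \<open>bounded_linear A\<close> el])
  have "norm (A e) \<le> 0 + \<eta>" if eta: "\<eta> > 0" for \<eta>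
  proof -
    obtain \<rho> where r: "\<rho> > 0" "\<forall>p\<in>X. \<forall>q\<in>X. dist p x0 < \<rho> \<longrightarrow> dist q x0 < \<rho> \<longrightarrow>
        norm (A (p - q)) \<le> \<eta> * norm (p - q)"
      using chord eta by blast
    have "eventually (\<lambda>j. dist (p j) x0 < \<rho>) sequentially" using pl r(1) unfolding tendsto_iff by blast
    moreover have "eventually (\<lambda>j. dist (q j) x0 < \<rho>) sequentially" using ql r(1) unfolding tendsto_iff by blast
    ultimately have "eventually (\<lambda>j. norm (A (sgn (p j - q j))) \<le> \<eta>) sequentially"
    proof eventually_elim
      case (elim j)
      have le: "norm (A (p j - q j)) \<le> \<eta> * norm (p j - q j)" using r(2) pq elim by blast
      have "A (sgn (p j - q j)) = (1 / norm (p j - q j)) *\<^sub>R A (p j - q j)"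
        using linA by (simp add: sgn_div_norm linear_scale divide_inverse)
      then show ?case using le pq by (simp add: pos_divide_le_eq)
    qed
    then show ?thesis using LIMSEQ_le[OF Al tendsto_const[of \<eta>]] unfolding eventually_sequentially by simp
  qed
  then have "norm (A e) \<le> 0" by (rule field_le_epsilon)
  then show "e \<in> {v. A v = 0}" by simp
qed

lemma subspace_projection:
  fixes K :: "'a::euclidean_space set"
  assumes "subspace K"
  obtains P where "linear P" "\<And>v. P v \<in> K" "\<And>v. v \<in> K \<Longrightarrow> P v = 0 \<Longrightarrow> v = 0"
proof -
  obtain B where B: "pairwise orthogonal B" "independent B" "span B = K"
    using orthonormal_basis_subspace[OF assms] by metis
  have finB: "finite B" using B(2) independent_imp_finite by blast
  define P where "P v = (\<Sum>b\<in>B. (v \<bullet> b) *\<^sub>R b)" for v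
  have "linear P" unfolding P_def
    by (rule linearI) (simp_all add: inner_add_left scaleR_add_left sum.distrib scaleR_sum_right)
  moreover have "P v \<in> K" for v
  proof -
    have "P v \<in> span B" unfolding P_def by (intro span_sum span_mul span_base)
    then show ?thesis using B(3) by simp
  qed
  moreover have "v = 0" if "v \<in> K" "P v = 0" for v
  proof -
    have "P v \<bullet> v = (\<Sum>b\<in>B. (v \<bullet> b)^2)"
      unfolding P_def by (simp add: inner_sum_left inner_sum_right power2_eq_square inner_commute[of b v for b])
    then have "\<forall>b\<in>B. (v \<bullet> b)^2 = 0" using that finB by (simp add: sum_nonneg_eq_0_iff)
    then have "\<forall>b\<in>B. orthogonal v b" by (simp add: orthogonal_def)
    then have "orthogonal v v" using that B(3) orthogonal_to_span by blast
    then show ?thesis by (simp add: orthogonal_def)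
  qed
  ultimately show ?thesis using that by blast
qed

lemma adjoint_into_kernel:
  fixes A :: "'a::euclidean_space \<Rightarrow> 'b::euclidean_space"
  assumes "linear A" "A (adjoint A y) = 0"
  shows "adjoint A y = 0"
proof -
  have "adjoint A y \<bullet> adjoint A y = y \<bullet> A (adjoint A y)"
    by (rule adjoint_clauses(2)[OF assms(1)])
  then show ?thesis using assms(2) by simp
qed

lemma adjoint_on_range:
  fixes A :: "'a::euclidean_space \<Rightarrow> 'b::euclidean_space"
  assumes "linear A" "adjoint A (A u) = 0"
  shows "A u = 0"
proof -
  have "A u \<bullet> A u = adjoint A (A u) \<bullet> u" by (rule adjoint_clauses(2)[OF assms(1), symmetric])
  then show ?thesis using assms(2) by simp
qed

lemma corrected_map_injective:
  fixes A :: "'a::euclidean_space \<Rightarrow> 'b::euclidean_space"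
  assumes linA: "linear A" and PK: "\<And>v. A (P v) = 0" and Pinj: "\<And>v. A v = 0 \<Longrightarrow> P v = 0 \<Longrightarrow> v = 0"
    and linP: "linear P"
  shows "inj (\<lambda>v. adjoint A (A v) + P v)"
proof -
  let ?M = "\<lambda>v. adjoint A (A v) + P v"
  have "linear (\<lambda>v. adjoint A (A v))"
    using linear_compose[OF linA adjoint_linear[OF linA]] by (simp add: o_def)
  then have linM: "linear ?M" using linP by (rule linear_compose_add)
  have "v = 0" if "?M v = 0" for v
  proof -
    have "adjoint A (A v) = - P v" using that by (simp add: eq_neg_iff_add_eq_0)
    then have "A (adjoint A (A v)) = 0" using PK by (simp add: linear_neg[OF linA])
    then have "adjoint A (A v) = 0" by (rule adjoint_into_kernel[OF linA])
    then have "A v = 0" by (rule adjoint_on_range[OF linA])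
    moreover have "P v = 0" using that \<open>adjoint A (A v) = 0\<close> by simp
    ultimately show ?thesis by (rule Pinj)
  qed
  then show ?thesis unfolding linear_injective_0[OF linM] by blast
qed

lemma corrected_map_detects_zeros:
  fixes A :: "'a::euclidean_space \<Rightarrow> 'b::euclidean_space"
  assumes linA: "linear A" and PK: "\<And>v. A (P v) = 0" and c: "c \<in> range A"
  shows "c = 0 \<longleftrightarrow> A (adjoint A c + P w) = 0"
proof
  assume "c = 0"
  then show "A (adjoint A c + P w) = 0" using PK adjoint_linear[OF linA] linA by (simp add: linear_0 linear_add)
next
  assume "A (adjoint A c + P w) = 0"
  then have "A (adjoint A c) = 0" using PK linA by (simp add: linear_add)
  then have "adjoint A c = 0" by (rule adjoint_into_kernel[OF linA])
  moreover obtain u where "c = A u" using c by blast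
  ultimately show "c = 0" using adjoint_on_range[OF linA] by simp
qed

lemma injective_blinfun_left_inverse:
  fixes L :: "'a::euclidean_space \<Rightarrow>\<^sub>L 'a"
  assumes "inj (blinfun_apply L)"
  shows "\<exists>Linv. Linv o\<^sub>L L = id_blinfun"
proof -
  obtain Minv where Minv: "linear Minv" "Minv \<circ> blinfun_apply L = id"
    using linear_injective_left_inverse[OF _ assms] blinfun.bounded_linear_right bounded_linear.linear
    by blast
  have "blinfun_apply (Blinfun Minv) = Minv"
    using Minv(1) by (simp add: bounded_linear_Blinfun_apply linear_conv_bounded_linear)
  then have "Blinfun Minv o\<^sub>L L = id_blinfun" using Minv(2) by (intro blinfun_eqI) (simp add: pointfree_idE)
  then show ?thesis by blast
qed

locale flattening_chart =
  fixes X :: "'a::euclidean_space set" and x0 :: 'a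
    and U V :: "'a set" and \<Phi> g :: "'a \<Rightarrow> 'a" and K :: "'a set" and M :: "'a \<Rightarrow> 'a"
  assumes open_U: "open U" and x0_U: "x0 \<in> U" and open_V: "open V"
    and Phi_x0: "\<Phi> x0 = 0" and homeo: "homeomorphism U V \<Phi> g"
    and subspace_K: "subspace K" and linear_M: "linear M" and inj_M: "inj M"
    and M_K: "\<And>w. w \<in> K \<Longrightarrow> M w \<in> K"
    and g_deriv: "(g has_derivative inv M) (at 0)"
    and Phi_strict: "\<And>\<eta>. \<eta> > 0 \<Longrightarrow> \<exists>\<rho>>0. \<forall>p\<in>ball x0 \<rho>. \<forall>q\<in>ball x0 \<rho>.
        norm (\<Phi> p - \<Phi> q - M (p - q)) \<le> \<eta> * norm (p - q)"
    and flattens: "\<And>z. z \<in> U \<Longrightarrow> z \<in> X \<longleftrightarrow> \<Phi> z \<in> K"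
begin

lemma g_Phi: "z \<in> U \<Longrightarrow> g (\<Phi> z) = z" and Phi_g: "y \<in> V \<Longrightarrow> \<Phi> (g y) = y"
  and g_V: "y \<in> V \<Longrightarrow> g y \<in> U" and Phi_U: "z \<in> U \<Longrightarrow> \<Phi> z \<in> V"
  using homeo by (auto simp: homeomorphism_def)

lemma zero_V: "0 \<in> V" and g_0: "g 0 = x0"
  using Phi_U[OF x0_U] g_Phi[OF x0_U] by (simp_all add: Phi_x0)

lemma g_in_X: "y \<in> V \<Longrightarrow> y \<in> K \<Longrightarrow> g y \<in> X"
  using flattens[OF g_V] Phi_g by simp

text \<open>Since M is injective, it is bounded below.\<close>
lemma M_bounded_below: "\<exists>B>0. \<forall>x. norm x \<le> norm (M x) * B"
proof -
  obtain Minv where Minv: "linear Minv" "Minv \<circ> M = id"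
    using linear_injective_left_inverse[OF linear_M inj_M] by blast
  obtain B where B: "B > 0" "\<forall>x. norm (Minv x) \<le> norm x * B"
    using bounded_linear.pos_bounded[of Minv] Minv(1) by (auto simp: linear_conv_bounded_linear)
  have "norm x \<le> norm (M x) * B" for x
    using B(2)[rule_format, of "M x"] Minv(2) by (metis comp_apply id_apply)
  then show ?thesis using B(1) by blast
qed

text \<open>Straight lines through 0 in K are pulled back to curves in X through x0, so K
  consists of tangent vectors.\<close>
lemma subspace_tangent: "K \<subseteq> tangent_space X x0"
proof
  fix w assume wK: "w \<in> K"
  define m where "m = M w"
  have mK: "m \<in> K" using M_K[OF wK] by (simp add: m_def)
  obtain e where e: "e > 0" "ball 0 e \<subseteq> V" using open_V zero_V open_contains_ball by blast
  define e' where "e' = e / (norm m + 1)"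
  have e'p: "e' > 0" using e by (simp add: e'_def add_nonneg_pos)
  have inV: "t *\<^sub>R m \<in> V" if "\<bar>t\<bar> < e'" for t
  proof -
    have m1: "norm m + 1 > 0" by (simp add: add_nonneg_pos)
    have "norm (t *\<^sub>R m) \<le> \<bar>t\<bar> * (norm m + 1)" by (simp add: mult_left_mono)
    also have "\<dots> < e' * (norm m + 1)" using that m1 by (rule mult_strict_right_mono)
    also have "\<dots> = e" using m1 by (simp add: e'_def)
    finally show ?thesis using e(2) by (auto simp: dist_norm)
  qed
  define \<gamma> where "\<gamma> t = g (t *\<^sub>R m)" for t
  have "\<gamma> t \<in> X" if "\<bar>t\<bar> < e'" for t
    unfolding \<gamma>_def using inV[OF that] mK subspace_K by (intro g_in_X) (auto simp: subspace_mul)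
  moreover have "\<gamma> 0 = x0" using g_0 by (simp add: \<gamma>_def)
  moreover have "(\<gamma> has_vector_derivative w) (at 0)"
  proof -
    have "((\<lambda>t::real. t *\<^sub>R m) has_derivative (\<lambda>t. t *\<^sub>R m)) (at 0)"
      by (intro derivative_eq_intros) auto
    then have "((g \<circ> (\<lambda>t. t *\<^sub>R m)) has_derivative (inv M \<circ> (\<lambda>t. t *\<^sub>R m))) (at 0)"
      using g_deriv by (intro diff_chain_at) simp_all
    moreover have "inv M (t *\<^sub>R m) = t *\<^sub>R w" for t
      using inj_M linear_M by (simp add: m_def linear_scale[symmetric] inv_f_f)
    ultimately show ?thesis unfolding has_vector_derivative_def \<gamma>_def by (simp add: o_def)
  qed
  ultimately show "w \<in> tangent_space X x0" unfolding tangent_space_def using e'p by blast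
qed

lemma chord_direction:
  assumes B: "\<forall>x. norm x \<le> norm (M x) * B" and strict: "\<forall>p\<in>ball x0 \<rho>. \<forall>q\<in>ball x0 \<rho>.
        norm (\<Phi> p - \<Phi> q - M (p - q)) \<le> \<eta> * norm (p - q)"
    and pq: "p \<in> ball x0 \<rho>" "q \<in> ball x0 \<rho>" "p \<noteq> q" and image: "\<Phi> p - \<Phi> q = M (t *\<^sub>R w)"
    and t: "t \<ge> 0" and w: "norm w = 1" and B_pos: "B > 0" and eta: "\<eta> \<ge> 0"
  shows "norm (sgn (p - q) - w) \<le> 2 * (B * \<eta>)"
proof (rule sgn_approx)
  have "M (t *\<^sub>R w - (p - q)) = \<Phi> p - \<Phi> q - M (p - q)"
    using linear_M image by (simp add: linear_diff)
  then have "norm (M (t *\<^sub>R w - (p - q))) \<le> \<eta> * norm (p - q)" using strict pq by simp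
  then show "norm (t *\<^sub>R w - (p - q)) \<le> B * \<eta> * norm (p - q)"
    using B[rule_format, of "t *\<^sub>R w - (p - q)"] B_pos
    by (smt (verit, best) mult.commute mult.left_commute mult_right_mono)
qed (use pq t w in auto)

lemma subspace_directions_attainable:
  assumes wK: "w \<in> K" and w: "norm w = 1"
  shows "directions_attainable X x0 w"
  unfolding directions_attainable_def
proof (intro allI impI)
  fix \<epsilon> :: real assume ep: "\<epsilon> > 0"
  obtain B where B: "B > 0" "\<forall>x. norm x \<le> norm (M x) * B" using M_bounded_below by blast
  define \<eta> where "\<eta> = \<epsilon> / (2 * B)"
  have eta: "\<eta> > 0" "2 * (B * \<eta>) = \<epsilon>" using ep B by (simp_all add: \<eta>_def)
  obtain \<rho>0 where r0: "\<rho>0 > 0" "\<forall>p\<in>ball x0 \<rho>0. \<forall>q\<in>ball x0 \<rho>0.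
      norm (\<Phi> p - \<Phi> q - M (p - q)) \<le> \<eta> * norm (p - q)"
    using Phi_strict[OF eta(1)] by blast
  obtain \<rho>U where rU: "\<rho>U > 0" "ball x0 \<rho>U \<subseteq> U" using open_U x0_U open_contains_ball by blast
  define \<rho> where "\<rho> = min \<rho>0 \<rho>U / 2"
  have rp: "\<rho> > 0" using r0 rU by (simp add: \<rho>_def)
  have m: "M w \<in> K" "M w \<noteq> 0"
    using M_K[OF wK] w inj_M linear_M by (auto simp: linear_injective_0)
  show "\<exists>\<rho>>0. \<forall>x'\<in>X. dist x' x0 < \<rho> \<longrightarrow>
      (\<forall>r>0. \<exists>\<xi>\<in>X. \<xi> \<noteq> x' \<and> dist \<xi> x' < r \<and> norm (sgn (\<xi> - x') - w) \<le> \<epsilon>)"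
  proof (intro exI[of _ \<rho>] conjI ballI impI allI rp)
    fix x' r assume x'X: "x' \<in> X" and dx: "dist x' x0 < \<rho>" and rpos: "(r::real) > 0"
    have x'U: "x' \<in> U" using rU dx by (auto simp: \<rho>_def dist_commute)
    define \<zeta> where "\<zeta> = \<Phi> x'"
    have zV: "\<zeta> \<in> V" and zK: "\<zeta> \<in> K" using Phi_U[OF x'U] flattens[OF x'U] x'X by (auto simp: \<zeta>_def)
    \<comment> \<open>move from \<zeta> a short distance along M w, staying in V and keeping g close to x'\<close>
    obtain d where d: "d > 0" "\<forall>y\<in>V. dist y \<zeta> < d \<longrightarrow> dist (g y) (g \<zeta>) < min r \<rho>"
      using homeomorphism_cont2[OF homeo] zV rpos rp unfolding continuous_on_iff by (metis min_less_iff_conj)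
    obtain d2 where d2: "d2 > 0" "ball \<zeta> d2 \<subseteq> V" using open_V zV open_contains_ball by blast
    define t where "t = min d d2 / (2 * norm (M w))"
    have tp: "t > 0" using d d2 m by (simp add: t_def)
    define y where "y = \<zeta> + t *\<^sub>R M w"
    have "min d d2 > 0" using d d2 by simp
    moreover have "dist y \<zeta> = min d d2 / 2" using m calculation by (simp add: y_def dist_norm t_def)
    ultimately have dy: "dist y \<zeta> < min d d2" by linarith
    then have yV: "y \<in> V" using d2 by (auto simp: dist_commute)
    define \<xi> where "\<xi> = g y"
    have xiX: "\<xi> \<in> X" unfolding \<xi>_def using yV zK m subspace_K
      by (intro g_in_X) (auto simp: y_def subspace_add subspace_mul)
    have dxi: "dist \<xi> x' < min r \<rho>" using d(2) yV dy g_Phi[OF x'U] by (auto simp: \<xi>_def \<zeta>_def)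
    have image: "\<Phi> \<xi> - \<Phi> x' = M (t *\<^sub>R w)"
      using Phi_g[OF yV] linear_M by (simp add: \<xi>_def y_def \<zeta>_def linear_scale)
    then have neq: "\<xi> \<noteq> x'" using tp m linear_M by (auto simp: linear_scale)
    have "\<rho> + \<rho> \<le> \<rho>0" by (simp add: \<rho>_def)
    then have balls: "\<xi> \<in> ball x0 \<rho>0" "x' \<in> ball x0 \<rho>0"
      using dx dxi dist_triangle[of x0 \<xi> x'] rp by (auto simp: dist_commute)
    have "norm (sgn (\<xi> - x') - w) \<le> \<epsilon>"
      using chord_direction[OF B(2) r0(2) balls neq image] tp w B(1) eta by simp
    then show "\<exists>\<xi>\<in>X. \<xi> \<noteq> x' \<and> dist \<xi> x' < r \<and> norm (sgn (\<xi> - x') - w) \<le> \<epsilon>"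
      using xiX neq dxi by auto
  qed
qed

end

text \<open>The zero set of a C^1 map F with surjective derivative at x0 admits a flattening chart
  onto ker F'(x0): correct F by the projection onto this kernel and apply the inverse function
  theorem to \<Phi>(z) = F'(x0)*(F z) + P(z - x0).\<close>
lemma zero_set_flattening_chart:
  fixes F :: "'a::euclidean_space \<Rightarrow> 'a" and F' :: "'a \<Rightarrow> 'a \<Rightarrow>\<^sub>L 'a"
  assumes U: "open U" "x0 \<in> U" and x0X: "x0 \<in> X"
    and derF: "\<forall>z\<in>U. (F has_derivative blinfun_apply (F' z)) (at z)" and contF: "continuous_on U F'"
    and FU: "F ` U \<subseteq> range (blinfun_apply (F' x0))"
    and zeros: "X \<inter> U = {z\<in>U. F z = 0}"
  shows "\<exists>U2 V \<Phi> g M. flattening_chart X x0 U2 V \<Phi> g {v. F' x0 v = 0} M"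
proof -
  define A where "A = blinfun_apply (F' x0)"
  define K where "K = {v. A v = 0}"
  define At where "At = adjoint A"
  have linA: "linear A" unfolding A_def by (simp add: blinfun.bounded_linear_right bounded_linear.linear)
  have subK: "subspace K" unfolding K_def using linA by (simp add: linear_subspace_kernel)
  obtain P where P: "linear P" "\<And>v. P v \<in> K" "\<And>v. v \<in> K \<Longrightarrow> P v = 0 \<Longrightarrow> v = 0"
    using subspace_projection[OF subK] by blast
  have PK: "A (P v) = 0" for v using P(2) by (simp add: K_def)
  define M where "M v = At (A v) + P v" for v
  have Pinj: "v = 0" if "A v = 0" "P v = 0" for v using P(3) that by (simp add: K_def)
  have injM: "inj M" unfolding M_def[abs_def] At_def by (rule corrected_map_injective[OF linA PK Pinj P(1)])
  have MK: "M w \<in> K" if "w \<in> K" for w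
    using that P(2) adjoint_linear[OF linA] by (simp add: M_def At_def K_def linear_0)
  have bl: "bounded_linear At" "bounded_linear P"
    using adjoint_linear[OF linA] P(1) by (simp_all add: At_def linear_conv_bounded_linear)
  define \<Phi> where "\<Phi> z = At (F z) + P (z - x0)" for z
  define \<Phi>' where "\<Phi>' z = (Blinfun At o\<^sub>L F' z) + Blinfun P" for z
  have app_Phi': "blinfun_apply (\<Phi>' z) = (\<lambda>v. At (F' z v) + P v)" for z
    unfolding \<Phi>'_def using bl by (intro ext) (simp add: plus_blinfun.rep_eq bounded_linear_Blinfun_apply)
  have Phi'_x0: "blinfun_apply (\<Phi>' x0) = M" using app_Phi' by (auto simp: M_def A_def)
  have linM: "linear M" using Phi'_x0[symmetric] by (simp add: blinfun.bounded_linear_right bounded_linear.linear)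
  have dPhi: "\<forall>z\<in>U. (\<Phi> has_derivative blinfun_apply (\<Phi>' z)) (at z)"
  proof
    fix z assume "z \<in> U"
    have "((\<lambda>z. At (F z)) has_derivative (\<lambda>v. At (F' z v))) (at z)"
      using bounded_linear.has_derivative[OF bl(1)] derF \<open>z \<in> U\<close> by blast
    moreover have "((\<lambda>z. P (z - x0)) has_derivative (\<lambda>v. P (v - 0))) (at z)"
      by (intro bounded_linear.has_derivative[OF bl(2)] derivative_intros)
    ultimately have "(\<Phi> has_derivative (\<lambda>v. At (F' z v) + P (v - 0))) (at z)"
      unfolding \<Phi>_def by (rule has_derivative_add)
    then show "(\<Phi> has_derivative blinfun_apply (\<Phi>' z)) (at z)" by (simp add: app_Phi')
  qed
  have cPhi: "continuous_on U \<Phi>'" unfolding \<Phi>'_def by (intro continuous_intros contF)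
  have "F x0 = 0" using x0X U zeros by blast
  then have Phi_x0: "\<Phi> x0 = 0" using bl by (simp add: \<Phi>_def linear_0 bounded_linear.linear)
  have flat: "z \<in> X \<longleftrightarrow> \<Phi> z \<in> K" if "z \<in> U" for z
  proof -
    have "F z \<in> range A" using FU that unfolding A_def by (rule subsetD[OF _ imageI])
    then have "F z = 0 \<longleftrightarrow> A (At (F z) + P (z - x0)) = 0"
      unfolding At_def by (rule corrected_map_detects_zeros[OF linA PK])
    then show ?thesis using zeros that by (auto simp: \<Phi>_def K_def)
  qed
  obtain Minv where inv_Phi': "Minv o\<^sub>L \<Phi>' x0 = id_blinfun"
    using injective_blinfun_left_inverse[of "\<Phi>' x0"] injM Phi'_x0 by auto
  obtain U2 V g g' where U2: "open U2" "U2 \<subseteq> U" "x0 \<in> U2" and V: "open V" "\<Phi> x0 \<in> V"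
    and homeo: "homeomorphism U2 V \<Phi> g"
    and dg: "\<And>y. y \<in> V \<Longrightarrow> (g has_derivative (g' y)) (at y)"
    and g': "\<And>y. y \<in> V \<Longrightarrow> g' y = inv (blinfun_apply (\<Phi>' (g y)))"
    and "\<And>y. y \<in> V \<Longrightarrow> bij (blinfun_apply (\<Phi>' (g y)))"
    by (rule inverse_function_theorem[OF U(1) dPhi[rule_format] cPhi U(2) inv_Phi']) auto
  have g0: "g 0 = x0" using homeomorphism_apply1[OF homeo U2(3)] Phi_x0 by simp
  have g_deriv: "(g has_derivative inv M) (at 0)"
    using dg[of 0] g'[of 0] V(2) Phi_x0 g0 Phi'_x0 by simp
  have strict: "\<exists>\<rho>>0. \<forall>p\<in>ball x0 \<rho>. \<forall>q\<in>ball x0 \<rho>. norm (\<Phi> p - \<Phi> q - M (p - q)) \<le> \<eta> * norm (p - q)"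
    if "\<eta> > 0" for \<eta>
    using continuous_derivative_strict[OF U dPhi cPhi that] unfolding Phi'_x0 by blast
  have flat2: "z \<in> X \<longleftrightarrow> \<Phi> z \<in> K" if "z \<in> U2" for z using flat U2(2) that by blast
  have "flattening_chart X x0 U2 V \<Phi> g K M"
    using Phi_x0 by (intro flattening_chart.intro[OF U2(1,3) V(1) _ homeo subK linM injM MK g_deriv strict flat2])
  then have "flattening_chart X x0 U2 V \<Phi> g {v. F' x0 v = 0} M" by (simp add: K_def A_def)
  then show ?thesis by blast
qed

text \<open>The tangent space of a C^1 submanifold at x0 is the kernel of the derivative of a local
  defining map; it contains all limiting chord directions, and all its unit vectors are
  attainable directions of X near x0.\<close>
lemma submanifold_tangent_geometry:
  assumes mf: "C1_submanifold X d" and x0X: "x0 \<in> X"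
  shows "chords_tangent X x0 (tangent_space X x0)"
    and "\<And>u. u \<in> tangent_space X x0 \<Longrightarrow> u \<noteq> 0 \<Longrightarrow> directions_attainable X x0 (sgn u)"
proof -
  obtain U W and F :: "'a \<Rightarrow> 'a" and F' :: "'a \<Rightarrow> 'a \<Rightarrow>\<^sub>L 'a" where
    U: "open U" "x0 \<in> U" and derF: "\<forall>z\<in>U. (F has_derivative blinfun_apply (F' z)) (at z)"
    and contF: "continuous_on U F'" and FW: "F ` U \<subseteq> W" and rng: "range (blinfun_apply (F' x0)) = W"
    and zeros: "X \<inter> U = {z\<in>U. F z = 0}"
    using mf x0X unfolding C1_submanifold_def by blast
  define A where "A = blinfun_apply (F' x0)"
  have linA: "linear A" unfolding A_def by (simp add: blinfun.bounded_linear_right bounded_linear.linear)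
  have "tangent_space X x0 \<subseteq> {v. A v = 0}"
    using zero_set_tangent_subset_kernel[OF U zeros] derF U(2) by (simp add: A_def)
  moreover obtain U2 V \<Phi> g M where chart: "flattening_chart X x0 U2 V \<Phi> g {v. A v = 0} M"
    using zero_set_flattening_chart[OF U x0X derF contF _ zeros] FW rng by (auto simp: A_def)
  ultimately have T: "tangent_space X x0 = {v. A v = 0}"
    using flattening_chart.subspace_tangent[OF chart] by blast
  have "\<forall>\<eta>>0. \<exists>\<rho>>0. \<forall>p\<in>X. \<forall>q\<in>X. dist p x0 < \<rho> \<longrightarrow> dist q x0 < \<rho> \<longrightarrow>
      norm (A (p - q)) \<le> \<eta> * norm (p - q)"
  proof (intro allI impI)
    fix \<eta> :: real assume "\<eta> > 0"
    then obtain \<rho> where "\<rho> > 0" "ball x0 \<rho> \<subseteq> U"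
      "\<forall>p\<in>ball x0 \<rho>. \<forall>q\<in>ball x0 \<rho>. norm (F p - F q - A (p - q)) \<le> \<eta> * norm (p - q)"
      using continuous_derivative_strict[OF U derF contF] unfolding A_def by blast
    then show "\<exists>\<rho>>0. \<forall>p\<in>X. \<forall>q\<in>X. dist p x0 < \<rho> \<longrightarrow> dist q x0 < \<rho> \<longrightarrow>
        norm (A (p - q)) \<le> \<eta> * norm (p - q)"
      using zero_set_chord_estimate[OF zeros] by blast
  qed
  then show "chords_tangent X x0 (tangent_space X x0)"
    unfolding T by (rule kernel_chords_tangent[OF linA])
  show "directions_attainable X x0 (sgn u)" if "u \<in> tangent_space X x0" "u \<noteq> 0" for u
  proof (rule flattening_chart.subspace_directions_attainable[OF chart])
    show "sgn u \<in> {v. A v = 0}" using that T linA by (simp add: sgn_div_norm linear_scale)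
    show "norm (sgn u) = 1" using that(2) by (simp add: norm_sgn)
  qed
qed

section \<open>Regular normals produced by a failure of the Aubin property\<close>

lemma regular_normal_if_proximal:
  fixes D :: "'a::euclidean_space set"
  assumes r: "r > 0" and C: "C \<ge> 0"
    and ineq: "\<forall>z\<in>D. norm (z - z0) < r \<longrightarrow> inner w (z - z0) \<le> C * (norm (z - z0))^2"
  shows "w \<in> regular_normal_cone D z0"
  unfolding regular_normal_cone_def
proof (intro CollectI allI impI)
  fix \<epsilon> :: real assume ep: "\<epsilon> > 0"
  define \<delta> where "\<delta> = min r (\<epsilon> / (C + 1))"
  have dp: "\<delta> > 0" using r ep C by (simp add: \<delta>_def)
  show "\<exists>\<delta>>0. \<forall>z\<in>D. norm (z - z0) < \<delta> \<longrightarrow> inner w (z - z0) \<le> \<epsilon> * norm (z - z0)"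
  proof (intro exI[of _ \<delta>] conjI ballI impI dp)
    fix z assume z: "z \<in> D" "norm (z - z0) < \<delta>"
    have "C * norm (z - z0) \<le> C * (\<epsilon> / (C + 1))" using z C by (intro mult_left_mono) (auto simp: \<delta>_def)
    also have "\<dots> \<le> \<epsilon>" using C ep by (simp add: field_simps)
    finally have "(C * norm (z - z0)) * norm (z - z0) \<le> \<epsilon> * norm (z - z0)" by (simp add: mult_right_mono)
    moreover have "inner w (z - z0) \<le> C * (norm (z - z0))^2" using ineq z by (simp add: \<delta>_def)
    ultimately show "inner w (z - z0) \<le> \<epsilon> * norm (z - z0)" by (simp add: power2_eq_square mult.assoc)
  qed
qed

lemma regular_normal_cone_scaleR:
  assumes w: "w \<in> regular_normal_cone D z0" and c: "c > 0"
  shows "c *\<^sub>R w \<in> regular_normal_cone D z0"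
  unfolding regular_normal_cone_def
proof (intro CollectI allI impI)
  fix \<epsilon> :: real assume "\<epsilon> > 0"
  then have "\<epsilon> / c > 0" using c by simp
  then obtain \<delta> where d: "\<delta> > 0" "\<forall>z\<in>D. norm (z - z0) < \<delta> \<longrightarrow> inner w (z - z0) \<le> (\<epsilon>/c) * norm (z - z0)"
    using w unfolding regular_normal_cone_def by blast
  have "inner (c *\<^sub>R w) (z - z0) \<le> \<epsilon> * norm (z - z0)" if "z \<in> D" "norm (z - z0) < \<delta>" for z
  proof -
    have "c * inner w (z - z0) \<le> c * ((\<epsilon>/c) * norm (z - z0))"
      using d(2) that c by (intro mult_left_mono) auto
    then show ?thesis using c by simp
  qed
  then show "\<exists>\<delta>>0. \<forall>z\<in>D. norm (z - z0) < \<delta> \<longrightarrow> inner (c *\<^sub>R w) (z - z0) \<le> \<epsilon> * norm (z - z0)"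
    using d(1) by blast
qed

text \<open>Variational heart of the sufficiency proof: at a local minimiser (q, \<eta>0) over G of the
  penalty \<kappa>|\<xi> - b| + sqrt(|\<eta> - y|^2 + \<delta>^2), with q \<noteq> b, the gradient of the penalty gives
  a (proximal, hence) regular normal to G.\<close>
lemma penalty_minimizer_normal:
  fixes G :: "('n::euclidean_space \<times> 'm::euclidean_space) set" and \<kappa> \<delta> :: real and b :: 'n and y :: 'm
  defines "J \<equiv> \<lambda>(\<xi>, \<eta>). \<kappa> * norm (\<xi> - b) + sqrt ((norm (\<eta> - y))^2 + \<delta>^2)"
  assumes kp: "\<kappa> > 0" and dp: "\<delta> > 0" and qb: "q \<noteq> b" and r: "r > 0"
    and min: "\<forall>z\<in>G. norm (z - (q, \<eta>0)) < r \<longrightarrow> J (q, \<eta>0) \<le> J z"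
  shows "(\<kappa> *\<^sub>R sgn (b - q), - ((1 / sqrt ((norm (\<eta>0 - y))^2 + \<delta>^2)) *\<^sub>R (\<eta>0 - y)))
           \<in> regular_normal_cone G (q, \<eta>0)"
    (is "?w \<in> _")
proof -
  define R where "R = sqrt ((norm (\<eta>0 - y))^2 + \<delta>^2)"
  define L where "L = norm (q - b)"
  have Rp: "R > 0" using dp by (simp add: R_def add_nonneg_pos)
  have Rd: "R \<ge> \<delta>" unfolding R_def by (rule real_le_rsqrt) simp
  have Lp: "L > 0" using qb by (simp add: L_def)
  define C where "C = \<kappa> / (2 * L) + 1 / (2 * \<delta>)"
  show ?thesis
  proof (rule regular_normal_if_proximal[OF r])
    show "C \<ge> 0" using kp Lp dp by (simp add: C_def)
    show "\<forall>z\<in>G. norm (z - (q, \<eta>0)) < r \<longrightarrow> inner ?w (z - (q, \<eta>0)) \<le> C * (norm (z - (q, \<eta>0)))^2"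
    proof (intro ballI impI)
      fix z assume z: "z \<in> G" "norm (z - (q, \<eta>0)) < r"
      obtain \<xi> \<eta> where zz: "z = (\<xi>, \<eta>)" by (cases z)
      define I1 N1 I2 N2 where "I1 = inner (q - b) (\<xi> - q)" and "N1 = (norm (\<xi> - q))^2"
        and "I2 = inner (\<eta>0 - y) (\<eta> - \<eta>0)" and "N2 = (norm (\<eta> - \<eta>0))^2"
      \<comment> \<open>second-order upper expansions of both terms of the penalty around the minimiser\<close>
      have sq1: "(norm (\<xi> - b))^2 = L^2 + 2 * I1 + N1"
        using norm_add_sq[of "q - b" "\<xi> - q"] by (simp add: L_def I1_def N1_def)
      have "sqrt ((norm (\<xi> - b))^2) \<le> L + I1 / L + N1 / (2 * L)"
        by (rule sqrt_expansion_upper[OF Lp zero_le_power2 sq1])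
      then have "norm (\<xi> - b) \<le> L + I1 / L + N1 / (2 * L)" by simp
      then have e1: "\<kappa> * norm (\<xi> - b) \<le> \<kappa> * L + \<kappa> * I1 / L + \<kappa> * N1 / (2 * L)"
        using mult_left_mono[OF _ less_imp_le[OF kp]] by (fastforce simp: distrib_left)
      have sq2: "(norm (\<eta> - y))^2 + \<delta>^2 = R^2 + 2 * I2 + N2"
        using norm_add_sq[of "\<eta>0 - y" "\<eta> - \<eta>0"] by (simp add: R_def I2_def N2_def)
      have e2: "sqrt ((norm (\<eta> - y))^2 + \<delta>^2) \<le> R + I2 / R + N2 / (2 * R)"
        by (rule sqrt_expansion_upper[OF Rp _ sq2]) simp
      have "J (q, \<eta>0) \<le> J z" using min z by blast
      then have J: "\<kappa> * L + R \<le> \<kappa> * norm (\<xi> - b) + sqrt ((norm (\<eta> - y))^2 + \<delta>^2)"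
        by (simp add: J_def zz L_def R_def)
      have inner_w: "inner ?w (z - (q, \<eta>0)) = - (\<kappa> * I1 / L) - I2 / R"
      proof -
        have "inner (b - q) (\<xi> - q) = - I1" unfolding I1_def by (metis inner_minus_left minus_diff_eq)
        then show ?thesis
          by (simp add: zz sgn_div_norm L_def R_def I2_def norm_minus_commute divide_inverse)
      qed
      have "N2 / (2 * R) \<le> N2 / (2 * \<delta>)" using Rd dp by (intro divide_left_mono) (auto simp: N2_def)
      moreover have "\<kappa> * N1 / (2 * L) \<le> C * N1"
        using mult_right_mono[of "\<kappa> / (2 * L)" C N1] dp by (simp add: C_def N1_def)
      moreover have "N2 / (2 * \<delta>) \<le> C * N2"
        using mult_right_mono[of "1 / (2 * \<delta>)" C N2] kp Lp by (simp add: C_def N2_def)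
      moreover have "(norm (z - (q, \<eta>0)))^2 = N1 + N2" by (simp add: zz norm_Pair N1_def N2_def)
      ultimately show "inner ?w (z - (q, \<eta>0)) \<le> C * (norm (z - (q, \<eta>0)))^2"
        using inner_w J e1 e2 by (simp add: distrib_left)
    qed
  qed
qed

lemma penalty_minimizer_chord_normal:
  fixes G :: "('n::euclidean_space \<times> 'm::euclidean_space) set" and \<kappa> \<delta> :: real and b :: 'n and y :: 'm
  defines "J \<equiv> \<lambda>(\<xi>, \<eta>). \<kappa> * norm (\<xi> - b) + sqrt ((norm (\<eta> - y))^2 + \<delta>^2)"
  assumes kp: "\<kappa> > 0" and dp: "\<delta> > 0" and qb: "q \<noteq> b" and r: "r > 0"
    and min: "\<forall>z\<in>G. norm (z - (q, \<eta>0)) < r \<longrightarrow> J (q, \<eta>0) \<le> J z"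
  shows "\<exists>v. norm v \<le> 1 / \<kappa> \<and> (sgn (b - q), v) \<in> regular_normal_cone G (q, \<eta>0)"
proof -
  define R where "R = sqrt ((norm (\<eta>0 - y))^2 + \<delta>^2)"
  have Rd: "R \<ge> \<delta>" and Ry: "R \<ge> norm (\<eta>0 - y)" unfolding R_def by (auto intro: real_le_rsqrt)
  have "(\<kappa> *\<^sub>R sgn (b - q), - ((1 / R) *\<^sub>R (\<eta>0 - y))) \<in> regular_normal_cone G (q, \<eta>0)"
    using penalty_minimizer_normal[OF kp dp qb r] min unfolding J_def R_def by blast
  then have "(1/\<kappa>) *\<^sub>R (\<kappa> *\<^sub>R sgn (b - q), - ((1 / R) *\<^sub>R (\<eta>0 - y))) \<in> regular_normal_cone G (q, \<eta>0)"
    using kp by (intro regular_normal_cone_scaleR) auto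
  then have "(sgn (b - q), - ((1 / (\<kappa> * R)) *\<^sub>R (\<eta>0 - y))) \<in> regular_normal_cone G (q, \<eta>0)"
    using kp by simp
  moreover have "norm (- ((1 / (\<kappa> * R)) *\<^sub>R (\<eta>0 - y))) \<le> 1 / \<kappa>"
  proof -
    have "norm (- ((1 / (\<kappa> * R)) *\<^sub>R (\<eta>0 - y))) = norm (\<eta>0 - y) / (\<kappa> * R)"
      using kp Rd dp by simp
    also have "\<dots> \<le> R / (\<kappa> * R)" using Ry kp Rd dp by (intro divide_right_mono) auto
    also have "\<dots> = 1 / \<kappa>" using Rd dp by simp
    finally show ?thesis .
  qed
  ultimately show ?thesis by blast
qed

definition near_chord_normal ::
  "('n::euclidean_space \<times> 'm::euclidean_space) set \<Rightarrow> 'n set \<Rightarrow> 'n \<Rightarrow> 'm \<Rightarrow> real \<Rightarrow> real \<Rightarrow> bool" where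
  "near_chord_normal G X x0 y0 \<rho> B \<longleftrightarrow> (\<exists>z p q v. z \<in> G \<and> dist z (x0, y0) < \<rho> \<and> p \<in> X \<and> q \<in> X \<and>
     dist p x0 < \<rho> \<and> dist q x0 < \<rho> \<and> p \<noteq> q \<and> norm v \<le> B \<and> (sgn (p - q), v) \<in> regular_normal_cone G z)"

text \<open>A violating triple (a, b, y) is found, and the penalty of
  penalty_minimizer_normal is minimised over the compact part of the graph near (x0, y0).\<close>
lemma aubin_failure_normal:
  fixes S :: "'n::euclidean_space \<Rightarrow> 'm::euclidean_space set"
  assumes dom: "\<forall>x. x \<notin> X \<longrightarrow> S x = {}" and lclosed: "locally_closed_at (graph S) (x0, y0)"
    and kp: "\<kappa> > 0" and Kk: "K > \<kappa>"
    and fail: "\<forall>V W. open V \<longrightarrow> x0 \<in> V \<longrightarrow> open W \<longrightarrow> y0 \<in> W \<longrightarrow> \<not> aubin_inclusion S X V W K"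
    and rho: "\<rho> > 0"
  shows "near_chord_normal (graph S) X x0 y0 \<rho> (1 / \<kappa>)"
proof -
  define G where "G = graph S"
  obtain \<epsilon>0 where e0: "\<epsilon>0 > 0" "closed (G \<inter> cball (x0, y0) \<epsilon>0)"
    using lclosed unfolding locally_closed_at_def G_def by blast
  define C0 where "C0 = G \<inter> cball (x0, y0) \<epsilon>0"
  have cC0: "compact C0"
    unfolding C0_def compact_eq_bounded_closed using e0(2) bounded_cball bounded_subset by blast
  define \<sigma> where "\<sigma> = min \<rho> (\<epsilon>0/2) / (2*K + 4)"
  have sp: "\<sigma> > 0" and s_le: "(2*K + 4) * \<sigma> = min \<rho> (\<epsilon>0/2)" using rho e0 kp Kk by (simp_all add: \<sigma>_def)
  have "\<not> aubin_inclusion S X (ball x0 \<sigma>) (ball y0 \<sigma>) K" using fail sp by simp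
  then obtain b a y where b: "b \<in> X" "dist b x0 < \<sigma>" and a: "a \<in> X" "dist a x0 < \<sigma>"
    and y: "y \<in> S a" "dist y y0 < \<sigma>" and viol: "\<forall>y'\<in>S b. \<not> dist y y' \<le> K * dist a b"
    unfolding aubin_inclusion_def by (auto simp: dist_commute)
  define D where "D = norm (a - b)"
  have Dp: "D > 0" using viol y(1) by (force simp: D_def)
  have D2: "D < 2 * \<sigma>" using a b dist_triangle2[of a b x0] by (simp add: D_def dist_norm)
  define \<delta> where "\<delta> = (K - \<kappa>) * D"
  have dp: "\<delta> > 0" using Kk Dp by (simp add: \<delta>_def)
  define J where "J z = \<kappa> * norm (fst z - b) + sqrt ((norm (snd z - y))^2 + \<delta>^2)" for z :: "'n \<times> 'm"
  have ayC0: "(a, y) \<in> C0"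
  proof -
    have "dist (x0, y0) (a, y) < 2 * \<sigma>" using a y dist_pair_le[of x0 y0 a y] by (simp add: dist_commute)
    moreover have "2 * \<sigma> \<le> \<epsilon>0" using s_le sp kp Kk mult_right_mono[of 2 "2*K+4" \<sigma>] by linarith
    ultimately show ?thesis using y(1) by (simp add: C0_def G_def graph_def)
  qed
  have "continuous_on C0 J" unfolding J_def by (intro continuous_intros)
  then obtain q \<eta>0 where zs: "(q, \<eta>0) \<in> C0" "\<forall>z\<in>C0. J (q, \<eta>0) \<le> J z"
    using continuous_attains_inf[OF cC0] ayC0 by (metis empty_iff prod.collapse)
  define R where "R = sqrt ((norm (\<eta>0 - y))^2 + \<delta>^2)"
  have Rd: "R \<ge> \<delta>" and Ry: "R \<ge> norm (\<eta>0 - y)" unfolding R_def by (auto intro: real_le_rsqrt)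
  have KD: "\<kappa> * D + \<delta> = K * D" by (simp add: \<delta>_def algebra_simps)
  have Jle: "\<kappa> * norm (q - b) + R \<le> \<kappa> * D + \<delta>"
    using zs(2)[rule_format, OF ayC0] dp by (simp add: J_def R_def D_def)
  have "\<kappa> * norm (q - b) \<le> \<kappa> * D" using Jle Rd by linarith
  then have qb: "norm (q - b) \<le> D" using kp by simp
  have "\<kappa> * norm (q - b) \<ge> 0" using kp by simp
  then have etay: "norm (\<eta>0 - y) \<le> K * D" using Jle Ry KD by linarith
  have eta_S: "\<eta>0 \<in> S q" using zs(1) by (simp add: C0_def G_def graph_def)
  have q_ne_b: "q \<noteq> b"
  proof
    assume "q = b"
    then have "norm (\<eta>0 - y) > K * D" using viol eta_S by (auto simp: dist_norm D_def norm_minus_commute)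
    then show False using Jle Ry KD \<open>q = b\<close> by simp
  qed
  \<comment> \<open>the minimiser is close to (x0, y0)\<close>
  have dq: "dist q x0 < 3 * \<sigma>" using qb D2 b dist_triangle[of q x0 b] by (simp add: dist_norm)
  have "K * D \<le> K * (2 * \<sigma>)" using D2 kp Kk by (intro mult_left_mono) auto
  then have deta: "dist \<eta>0 y0 < (2*K + 1) * \<sigma>"
    using etay y(2) dist_triangle[of \<eta>0 y0 y] by (simp add: dist_norm algebra_simps)
  have "(2*K + 4) * \<sigma> = 3 * \<sigma> + (2*K + 1) * \<sigma>" by (simp add: algebra_simps)
  then have dzs: "dist (q, \<eta>0) (x0, y0) < min \<rho> (\<epsilon>0/2)"
    using dist_pair_le[of q \<eta>0 x0 y0] dq deta s_le by linarith
  \<comment> \<open>hence it is a local minimiser over the whole graph\<close>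
  have "\<forall>z\<in>G. norm (z - (q, \<eta>0)) < \<epsilon>0/2 \<longrightarrow> J (q, \<eta>0) \<le> J z"
  proof (intro ballI impI)
    fix z assume "z \<in> G" "norm (z - (q, \<eta>0)) < \<epsilon>0/2"
    moreover have "dist z (x0, y0) < \<epsilon>0/2 + \<epsilon>0/2"
      using dzs dist_triangle[of z "(x0, y0)" "(q, \<eta>0)"] \<open>norm (z - (q, \<eta>0)) < \<epsilon>0/2\<close>
      by (simp add: dist_norm)
    ultimately have "z \<in> C0" by (simp add: C0_def dist_commute)
    then show "J (q, \<eta>0) \<le> J z" using zs(2) by blast
  qed
  then obtain v where normal: "norm v \<le> 1 / \<kappa>" "(sgn (b - q), v) \<in> regular_normal_cone G (q, \<eta>0)"
    using penalty_minimizer_chord_normal[OF kp dp q_ne_b, of "\<epsilon>0/2" G \<eta>0 y] e0(1)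
    unfolding J_def by (auto simp: case_prod_beta)
  have "3 * \<sigma> \<le> \<rho>" using s_le sp kp Kk mult_right_mono[of 3 "2*K+4" \<sigma>] by linarith
  then have "dist b x0 < \<rho>" "dist q x0 < \<rho>" "dist (q, \<eta>0) (x0, y0) < \<rho>"
    using b(2) dq dzs sp by linarith+
  moreover have "(q, \<eta>0) \<in> G" "q \<in> X" using zs(1) eta_S dom by (auto simp: C0_def)
  ultimately show ?thesis unfolding near_chord_normal_def G_def[symmetric]
    using b(1) q_ne_b normal by blast
qed

lemma near_chord_normal_mono:
  "near_chord_normal G X x0 y0 \<rho> B \<Longrightarrow> B \<le> B' \<Longrightarrow> near_chord_normal G X x0 y0 \<rho> B'"
  unfolding near_chord_normal_def by (meson order_trans)

lemma chord_normals_limit: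
  fixes G :: "('n::euclidean_space \<times> 'm::euclidean_space) set"
  assumes chords: "chords_tangent X x0 T"
    and near: "\<forall>j::nat. near_chord_normal G X x0 y0 (1 / Suc j) (B + 1 / Suc j)"
  shows "\<exists>e v0. e \<in> T \<and> norm e = 1 \<and> norm v0 \<le> B \<and> (e, v0) \<in> limiting_normal_cone G (x0, y0)"
proof -
  obtain zf pf qf vf where F: "\<forall>j. zf j \<in> G \<and> dist (zf j) (x0, y0) < 1 / Suc j \<and> pf j \<in> X \<and> qf j \<in> X
        \<and> dist (pf j) x0 < 1 / Suc j \<and> dist (qf j) x0 < 1 / Suc j \<and> pf j \<noteq> qf j \<and> norm (vf j) \<le> B + 1 / Suc j
        \<and> (sgn (pf j - qf j), vf j) \<in> regular_normal_cone G (zf j)"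
    using near unfolding near_chord_normal_def by metis
  define sf where "sf j = (sgn (pf j - qf j), vf j)" for j
  have "sf j \<in> cball 0 (2 + \<bar>B\<bar>)" for j
  proof -
    have "norm (sf j) \<le> norm (sgn (pf j - qf j)) + norm (vf j)" unfolding sf_def by (rule norm_Pair_le)
    also have "\<dots> \<le> 1 + (B + 1 / Suc j)" using F by (intro add_mono) (auto simp: norm_sgn)
    also have "\<dots> \<le> 2 + \<bar>B\<bar>" using divide_le_eq_1[of 1 "real (Suc j)"] by linarith
    finally show ?thesis by simp
  qed
  then obtain l r where lr: "strict_mono r" "(sf \<circ> r) \<longlonglongrightarrow> l"
    using seq_compactE[OF compact_imp_seq_compact[OF compact_cball]] by metis
  have zl: "zf \<longlonglongrightarrow> (x0, y0)" and pl: "pf \<longlonglongrightarrow> x0" and ql: "qf \<longlonglongrightarrow> x0"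
    using F by (auto intro: LIMSEQ_dist_inverse_Suc)
  have e_lim: "(\<lambda>j. sgn ((pf \<circ> r) j - (qf \<circ> r) j)) \<longlonglongrightarrow> fst l"
    using tendsto_fst[OF lr(2)] by (simp add: sf_def o_def)
  have v_lim: "(\<lambda>j. norm ((vf \<circ> r) j)) \<longlonglongrightarrow> norm (snd l)"
    using tendsto_norm[OF tendsto_snd[OF lr(2)]] by (simp add: sf_def o_def)
  have "fst l \<in> T"
    using chords[unfolded chords_tangent_def, rule_format, OF _ LIMSEQ_subseq_LIMSEQ[OF pl lr(1)]
        LIMSEQ_subseq_LIMSEQ[OF ql lr(1)] e_lim] F by simp
  moreover have "norm (fst l) = 1"
  proof -
    have "(\<lambda>j. norm (sgn ((pf \<circ> r) j - (qf \<circ> r) j))) = (\<lambda>j. 1)" using F by (auto simp: norm_sgn)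
    then show ?thesis using tendsto_norm[OF e_lim] LIMSEQ_unique tendsto_const by metis
  qed
  moreover have "norm (snd l) \<le> B"
  proof (rule LIMSEQ_le[OF v_lim])
    have "((\<lambda>j. inverse (real (Suc j))) \<circ> r) \<longlonglongrightarrow> 0"
      by (rule LIMSEQ_subseq_LIMSEQ[OF LIMSEQ_inverse_real_of_nat lr(1)])
    then show "(\<lambda>j. B + inverse (real (Suc (r j)))) \<longlonglongrightarrow> B"
      using tendsto_add[OF tendsto_const[of B]] by (fastforce simp: o_def)
    show "\<exists>N. \<forall>n\<ge>N. norm ((vf \<circ> r) n) \<le> B + inverse (real (Suc (r n)))"
      using F by (auto simp: inverse_eq_divide)
  qed
  moreover have "l \<in> limiting_normal_cone G (x0, y0)"
    unfolding limiting_normal_cone_def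
  proof (intro CollectI exI conjI allI)
    fix i show "(zf \<circ> r) i \<in> G" "(sf \<circ> r) i \<in> regular_normal_cone G ((zf \<circ> r) i)"
      using F by (simp_all add: sf_def)
    show "(zf \<circ> r) \<longlonglongrightarrow> (x0, y0)" using LIMSEQ_subseq_LIMSEQ[OF zl lr(1)] .
  qed (rule lr(2))
  ultimately show ?thesis by (metis prod.collapse)
qed

section \<open>Sufficiency: the criterion implies the Aubin property\<close>

text \<open>Otherwise the Aubin inclusion fails for every constant,
  and chord normals with vanishing y-components converge to such a normal.\<close>
lemma aubin_of_criterion:
  fixes S :: "'n::euclidean_space \<Rightarrow> 'm::euclidean_space set"
  assumes dom: "\<forall>x. x \<notin> X \<longrightarrow> S x = {}" and lclosed: "locally_closed_at (graph S) (x0, y0)"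
    and chords: "chords_tangent X x0 T"
    and crit: "\<And>e. (e, 0) \<in> limiting_normal_cone (graph S) (x0, y0) \<Longrightarrow> e \<in> T \<Longrightarrow> e = 0"
  shows "\<exists>V W \<kappa>. open V \<and> x0 \<in> V \<and> open W \<and> y0 \<in> W \<and> \<kappa> \<ge> 0 \<and> aubin_inclusion S X V W \<kappa>"
proof (rule ccontr)
  assume no_aubin: "\<not> ?thesis"
  have "near_chord_normal (graph S) X x0 y0 (1 / Suc j) (0 + 1 / Suc j)" for j :: nat
  proof -
    have "\<forall>V W. open V \<longrightarrow> x0 \<in> V \<longrightarrow> open W \<longrightarrow> y0 \<in> W \<longrightarrow> \<not> aubin_inclusion S X V W (2 * Suc j)"
      using no_aubin by (metis of_nat_0_le_iff)
    then show ?thesis using aubin_failure_normal[OF dom lclosed, of "Suc j" "2 * Suc j" "1 / Suc j"] by simp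
  qed
  then obtain e v0 where "e \<in> T" "norm e = 1" "norm v0 \<le> 0" "(e, v0) \<in> limiting_normal_cone (graph S) (x0, y0)"
    using chord_normals_limit[OF chords] by blast
  then show False using crit by force
qed

lemma aubin_modulus_upper:
  fixes S :: "'n::euclidean_space \<Rightarrow> 'm::euclidean_space set"
  assumes dom: "\<forall>x. x \<notin> X \<longrightarrow> S x = {}" and lclosed: "locally_closed_at (graph S) (x0, y0)"
    and chords: "chords_tangent X x0 T" and c: "c \<ge> 0"
    and bound: "\<And>u v. (u, v) \<in> limiting_normal_cone (graph S) (x0, y0) \<Longrightarrow> u \<in> T \<Longrightarrow> norm u \<le> c * norm v"
    and K: "K > c"
  shows "\<exists>V W. open V \<and> x0 \<in> V \<and> open W \<and> y0 \<in> W \<and> aubin_inclusion S X V W K"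
proof (rule ccontr)
  assume "\<not> ?thesis"
  then have fail: "\<forall>V W. open V \<longrightarrow> x0 \<in> V \<longrightarrow> open W \<longrightarrow> y0 \<in> W \<longrightarrow> \<not> aubin_inclusion S X V W K" by blast
  define \<kappa> where "\<kappa> = (c + K) / 2"
  have kp: "\<kappa> > 0" "K > \<kappa>" "\<kappa> > c" using c K by (auto simp: \<kappa>_def)
  have "near_chord_normal (graph S) X x0 y0 (1 / Suc j) (1 / \<kappa> + 1 / Suc j)" for j :: nat
    by (rule near_chord_normal_mono[OF aubin_failure_normal[OF dom lclosed kp(1,2) fail]]) simp_all
  then obtain e v0 where ev: "e \<in> T" "norm e = 1" "norm v0 \<le> 1 / \<kappa>"
    "(e, v0) \<in> limiting_normal_cone (graph S) (x0, y0)"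
    using chord_normals_limit[OF chords] by blast
  then have "1 \<le> c * norm v0" using bound by fastforce
  also have "\<dots> \<le> c * (1 / \<kappa>)" using ev(3) c by (rule mult_left_mono)
  also have "\<dots> < 1" using kp by (simp add: field_simps)
  finally show False by simp
qed

section \<open>Necessity: the Aubin property bounds the tangential normals\<close>

lemma regular_normal_graph_step:
  fixes S :: "'n::euclidean_space \<Rightarrow> 'm::euclidean_space set"
  assumes normal: "(u, v) \<in> regular_normal_cone (graph S) (x, y)" and ep: "\<epsilon> > 0" and K: "K \<ge> 0"
  shows "\<exists>r>0. \<forall>\<xi> \<eta>. \<eta> \<in> S \<xi> \<longrightarrow> \<xi> \<noteq> x \<longrightarrow> dist \<xi> x < r \<longrightarrow> dist y \<eta> \<le> K * dist x \<xi> \<longrightarrow>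
           inner u (sgn (\<xi> - x)) \<le> K * norm v + \<epsilon> * (1 + K)"
proof -
  obtain \<delta> where d: "\<delta> > 0" "\<forall>z\<in>graph S. norm (z - (x, y)) < \<delta> \<longrightarrow>
      inner (u, v) (z - (x, y)) \<le> \<epsilon> * norm (z - (x, y))"
    using normal ep unfolding regular_normal_cone_def by blast
  have "inner u (sgn (\<xi> - x)) \<le> K * norm v + \<epsilon> * (1 + K)"
    if "\<eta> \<in> S \<xi>" "\<xi> \<noteq> x" "dist \<xi> x < \<delta> / (1 + K)" "dist y \<eta> \<le> K * dist x \<xi>" for \<xi> \<eta>
  proof -
    define D where "D = norm (\<xi> - x)"
    have Dp: "D > 0" using that(2) by (simp add: D_def)
    have ne: "norm (\<eta> - y) \<le> K * D" using that(4) by (simp add: dist_norm D_def norm_minus_commute)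
    have nz: "norm ((\<xi>, \<eta>) - (x, y)) \<le> (1 + K) * D"
      using norm_Pair_le[of "\<xi> - x" "\<eta> - y"] ne by (simp add: D_def algebra_simps)
    moreover have "(1 + K) * D < \<delta>" using that(3) K by (simp add: D_def dist_norm field_simps)
    moreover have "(\<xi>, \<eta>) \<in> graph S" using that(1) by (simp add: graph_def)
    ultimately have "inner (u, v) ((\<xi>, \<eta>) - (x, y)) \<le> \<epsilon> * norm ((\<xi>, \<eta>) - (x, y))"
      using d(2) by force
    also have "\<dots> \<le> \<epsilon> * ((1 + K) * D)" using nz ep by (intro mult_left_mono) auto
    finally have in1: "inner u (\<xi> - x) + inner v (\<eta> - y) \<le> \<epsilon> * ((1 + K) * D)" by simp
    have "- inner v (\<eta> - y) \<le> norm v * norm (\<eta> - y)"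
      using norm_cauchy_schwarz[of "- v" "\<eta> - y"] by simp
    also have "\<dots> \<le> norm v * (K * D)" using ne by (rule mult_left_mono) simp
    finally have in2: "- inner v (\<eta> - y) \<le> norm v * (K * D)" .
    have "(K * norm v + \<epsilon> * (1 + K)) * D = norm v * (K * D) + \<epsilon> * ((1 + K) * D)"
      by (simp add: algebra_simps)
    then have "inner u (\<xi> - x) \<le> (K * norm v + \<epsilon> * (1 + K)) * D" using in1 in2 by linarith
    moreover have "inner u (sgn (\<xi> - x)) = inner u (\<xi> - x) / D"
      by (simp add: sgn_div_norm D_def divide_inverse)
    ultimately show ?thesis using Dp by (simp add: pos_divide_le_eq)
  qed
  moreover have "\<delta> / (1 + K) > 0" using d(1) K by simp
  ultimately show ?thesis by blast
qed

lemma perturbed_normal_estimate: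
  fixes u ui s :: "'a::real_inner"
  assumes u0: "u \<noteq> 0" and s: "norm s = 1" and s_close: "norm (s - sgn u) \<le> \<epsilon>" and K: "K \<ge> 0"
    and step: "inner ui s \<le> K * norm vi + \<epsilon> * (1 + K)"
    and u_close: "norm (u - ui) \<le> \<epsilon>" and vi: "norm vi \<le> norm v + \<epsilon>"
  shows "norm u \<le> K * norm v + \<epsilon> * (2 * K + 2 + norm u)"
proof -
  have "inner u (sgn u) = norm u" using u0
    by (simp add: sgn_div_norm divide_inverse power2_norm_eq_inner[symmetric] power2_eq_square)
  then have "norm u = inner ui s + inner (u - ui) s + inner u (sgn u - s)"
    by (simp add: inner_diff_left inner_diff_right)
  also have "\<dots> \<le> (K * norm vi + \<epsilon> * (1 + K)) + \<epsilon> + norm u * \<epsilon>"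
  proof -
    have "inner (u - ui) s \<le> \<epsilon>"
      using norm_cauchy_schwarz[of "u - ui" s] s u_close by simp
    moreover have "inner u (sgn u - s) \<le> norm u * \<epsilon>"
      using norm_cauchy_schwarz[of u "sgn u - s"] mult_left_mono[OF s_close, of "norm u"]
      by (simp add: norm_minus_commute)
    ultimately show ?thesis using step by linarith
  qed
  also have "K * norm vi \<le> K * (norm v + \<epsilon>)" using vi K by (rule mult_left_mono)
  finally show ?thesis by (simp add: algebra_simps)
qed

text \<open>Approximate (u, v) by regular
  normals, move from the base point along a chord of X in a direction close to u/|u| and
  follow the graph by the Aubin inclusion.\<close>
lemma aubin_bounds_tangential_normals:
  fixes S :: "'n::euclidean_space \<Rightarrow> 'm::euclidean_space set"
  assumes dom: "\<forall>x. x \<notin> X \<longrightarrow> S x = {}" and attain: "directions_attainable X x0 (sgn u)"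
    and aub: "aubin_inclusion S X V W K" and V: "open V" "x0 \<in> V" and W: "open W" "y0 \<in> W"
    and K: "K \<ge> 0" and uv: "(u, v) \<in> limiting_normal_cone (graph S) (x0, y0)" and u0: "u \<noteq> 0"
  shows "norm u \<le> K * norm v"
proof -
  obtain zs vs where zv: "\<forall>i. zs i \<in> graph S \<and> vs i \<in> regular_normal_cone (graph S) (zs i)"
    "zs \<longlonglongrightarrow> (x0, y0)" "vs \<longlonglongrightarrow> (u, v)"
    using uv unfolding limiting_normal_cone_def by blast
  obtain \<rho>V where rV: "\<rho>V > 0" "ball x0 \<rho>V \<subseteq> V" using V open_contains_ball by blast
  have key: "norm u \<le> K * norm v + \<epsilon> * (2 * K + 2 + norm u)" if ep: "\<epsilon> > 0" for \<epsilon>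
  proof -
    obtain \<rho> where r: "\<rho> > 0" "\<forall>x'\<in>X. dist x' x0 < \<rho> \<longrightarrow>
        (\<forall>r>0. \<exists>\<xi>\<in>X. \<xi> \<noteq> x' \<and> dist \<xi> x' < r \<and> norm (sgn (\<xi> - x') - sgn u) \<le> \<epsilon>)"
      using attain ep unfolding directions_attainable_def by blast
    have "min \<rho> (\<rho>V/2) > 0" using r(1) rV(1) by simp
    then have ev1: "eventually (\<lambda>i. dist (fst (zs i)) x0 < min \<rho> (\<rho>V/2)) sequentially"
      using tendsto_fst[OF zv(2)] unfolding tendsto_iff by fastforce
    have ev2: "eventually (\<lambda>i. snd (zs i) \<in> W) sequentially"
      using tendsto_snd[OF zv(2)] W unfolding tendsto_def by simp
    have ev3: "eventually (\<lambda>i. dist (fst (vs i)) u < \<epsilon>) sequentially"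
      using tendsto_fst[OF zv(3)] ep unfolding tendsto_iff by simp
    have ev4: "eventually (\<lambda>i. dist (snd (vs i)) v < \<epsilon>) sequentially"
      using tendsto_snd[OF zv(3)] ep unfolding tendsto_iff by simp
    obtain i where i: "dist (fst (zs i)) x0 < min \<rho> (\<rho>V/2)" "snd (zs i) \<in> W"
      "dist (fst (vs i)) u < \<epsilon>" "dist (snd (vs i)) v < \<epsilon>"
      using eventually_happens[OF eventually_conj[OF ev1 eventually_conj[OF ev2 eventually_conj[OF ev3 ev4]]]]
      by auto
    obtain xi yi ui vi where zi: "zs i = (xi, yi)" and vi: "vs i = (ui, vi)" by (cases "zs i", cases "vs i")
    have "(xi, yi) \<in> graph S" using zv(1) zi by metis
    then have yiS: "yi \<in> S xi" by (simp add: graph_def)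
    then have xiX: "xi \<in> X" using dom by blast
    have xiV: "xi \<in> V" using i(1) rV by (auto simp: zi dist_commute)
    obtain r0 where r0: "r0 > 0" "\<forall>\<xi> \<eta>. \<eta> \<in> S \<xi> \<longrightarrow> \<xi> \<noteq> xi \<longrightarrow> dist \<xi> xi < r0 \<longrightarrow>
        dist yi \<eta> \<le> K * dist xi \<xi> \<longrightarrow> inner ui (sgn (\<xi> - xi)) \<le> K * norm vi + \<epsilon> * (1 + K)"
      using regular_normal_graph_step[OF _ ep K] zv(1) zi vi by metis
    \<comment> \<open>a chord of X from xi in a direction close to u/|u|, followed in the graph\<close>
    have "dist xi x0 < \<rho>" "min r0 (\<rho>V/2) > 0" using i(1) r0(1) rV(1) by (simp_all add: zi)
    then obtain \<xi> where xi: "\<xi> \<in> X" "\<xi> \<noteq> xi" "dist \<xi> xi < min r0 (\<rho>V/2)"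
        "norm (sgn (\<xi> - xi) - sgn u) \<le> \<epsilon>"
      using r(2) xiX by blast
    have "dist \<xi> x0 < \<rho>V/2 + \<rho>V/2"
      using xi(3) i(1) dist_triangle[of \<xi> x0 xi] by (simp add: zi)
    then have "\<xi> \<in> X \<inter> V" using xi(1) rV by (auto simp: dist_commute)
    moreover have "xi \<in> X \<inter> V" "yi \<in> S xi \<inter> W" using xiX xiV yiS i(2) by (simp_all add: zi)
    ultimately have "\<exists>\<eta>\<in>S \<xi>. dist yi \<eta> \<le> K * dist xi \<xi>"
      using aub unfolding aubin_inclusion_def by blast
    then obtain \<eta> where eta: "\<eta> \<in> S \<xi>" "dist yi \<eta> \<le> K * dist xi \<xi>" by blast
    have step: "inner ui (sgn (\<xi> - xi)) \<le> K * norm vi + \<epsilon> * (1 + K)" using r0(2) eta xi by auto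
    show ?thesis
    proof (rule perturbed_normal_estimate[OF u0 _ xi(4) K step])
      show "norm (sgn (\<xi> - xi)) = 1" using xi(2) by (simp add: norm_sgn)
      show "norm (u - ui) \<le> \<epsilon>" "norm vi \<le> norm v + \<epsilon>"
        using i(3,4) norm_triangle_ineq2[of vi v] by (simp_all add: vi dist_norm norm_minus_commute)
    qed
  qed
  show ?thesis
  proof (rule field_le_epsilon)
    fix e :: real assume e: "e > 0"
    define c where "c = 2 * K + 2 + norm u"
    have cp: "c > 0" using K by (simp add: c_def add_pos_nonneg)
    show "norm u \<le> K * norm v + e" using key[of "e / c"] e cp by (simp add: c_def)
  qed
qed

lemma ratio_val_le_ereal_iff:
  assumes "a \<ge> 0" "b \<ge> 0" "\<kappa> \<ge> 0"
  shows "ratio_val a b \<le> ereal \<kappa> \<longleftrightarrow> a \<le> \<kappa> * b"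
  using assms by (auto simp: ratio_val_def pos_divide_le_eq)

lemma Inf_admissible_eq_Sup_ratio:
  fixes P :: "real \<Rightarrow> bool" and Q :: "'a::real_normed_vector \<Rightarrow> 'b::real_normed_vector \<Rightarrow> bool"
  assumes zero: "Q 0 0"
    and lower: "\<And>\<kappa> u v. \<kappa> \<ge> 0 \<Longrightarrow> P \<kappa> \<Longrightarrow> Q u v \<Longrightarrow> norm u \<le> \<kappa> * norm v"
    and upper: "\<And>c K. c \<ge> 0 \<Longrightarrow> (\<And>u v. Q u v \<Longrightarrow> norm u \<le> c * norm v) \<Longrightarrow> K > c \<Longrightarrow> P K"
  shows "Inf {ereal \<kappa> | \<kappa>. \<kappa> \<ge> 0 \<and> P \<kappa>} = Sup {ratio_val (norm u) (norm v) | u v. Q u v}"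
    (is "Inf ?A = Sup ?R")
proof (rule antisym)
  have R_nonneg: "0 \<le> Sup ?R" using zero by (intro Sup_upper2[of 0]) (auto simp: ratio_val_def)
  show "Inf ?A \<le> Sup ?R"
  proof (cases "Sup ?R")
    case (real c)
    have bound: "norm u \<le> c * norm v" if "Q u v" for u v
    proof -
      have "ratio_val (norm u) (norm v) \<le> ereal c" using that real by (metis (mono_tags, lifting) Sup_upper mem_Collect_eq)
      then show ?thesis using R_nonneg real by (simp add: ratio_val_le_ereal_iff)
    qed
    show ?thesis
    proof (rule ereal_le_epsilon2)
      fix e :: real assume "e > 0"
      then have "ereal (c + e) \<in> ?A" using real R_nonneg upper[OF _ bound] by auto
      then show "Inf ?A \<le> Sup ?R + ereal e" using real by (simp add: Inf_lower)
    qed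
  qed (use R_nonneg in auto)
  show "Sup ?R \<le> Inf ?A"
  proof (rule Inf_greatest, rule Sup_least)
    fix x r assume "x \<in> ?A" "r \<in> ?R"
    then obtain \<kappa> u v where "x = ereal \<kappa>" "\<kappa> \<ge> 0" "P \<kappa>" "r = ratio_val (norm u) (norm v)" "Q u v" by blast
    then show "r \<le> x" using lower by (simp add: ratio_val_le_ereal_iff)
  qed
qed

lemma outer_norm_restricted_coderivative:
  assumes H: "\<And>w z. z \<in> H w \<longleftrightarrow> (z, - w) \<in> N \<and> z \<in> T"
  shows "outer_norm H = Sup {ratio_val (norm u) (norm v) | u v. (u, v) \<in> N \<and> u \<in> T}"
proof -
  have "{ratio_val (norm z) (norm w) | w z. (w, z) \<in> graph H} =
        {ratio_val (norm u) (norm v) | u v. (u, v) \<in> N \<and> u \<in> T}"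
  proof (intro equalityI subsetI)
    fix r assume "r \<in> {ratio_val (norm z) (norm w) | w z. (w, z) \<in> graph H}"
    then obtain w z where "r = ratio_val (norm z) (norm w)" "(z, - w) \<in> N" "z \<in> T"
      using H by (auto simp: graph_def)
    then show "r \<in> {ratio_val (norm u) (norm v) | u v. (u, v) \<in> N \<and> u \<in> T}"
      by (auto intro!: exI[of _ z] exI[of _ "- w"])
  next
    fix r assume "r \<in> {ratio_val (norm u) (norm v) | u v. (u, v) \<in> N \<and> u \<in> T}"
    then obtain u v where "r = ratio_val (norm u) (norm v)" "(u, v) \<in> N" "u \<in> T" by blast
    moreover have "(- v, u) \<in> graph H" using H calculation(2,3) by (simp add: graph_def)
    ultimately show "r \<in> {ratio_val (norm z) (norm w) | w z. (w, z) \<in> graph H}"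
      by (auto intro!: exI[of _ "- v"] exI[of _ u])
  qed
  then show ?thesis unfolding outer_norm_def by simp
qed

theorem mainTheorem4:
  fixes X :: "'n::euclidean_space set" and d :: nat
    and S :: "'n \<Rightarrow> 'm::euclidean_space set"
    and x0 :: 'n and y0 :: 'm
    and H :: "'m \<Rightarrow> 'n set"
  assumes manifold: "C1_submanifold X d"
    and dom: "\<forall>x. x \<notin> X \<longrightarrow> S x = {}"
    and ingraph: "(x0, y0) \<in> graph S"
    and lclosed: "locally_closed_at (graph S) (x0, y0)"
    and H_def: "\<forall>ystar. H ystar = coderivative S x0 y0 ystar \<inter> tangent_space X x0"
    and H0: "H 0 = {0}"
  shows "aubin_rel S X x0 y0 \<and>
         graphical_modulus S X x0 y0 = outer_norm H \<and>
         outer_norm H = Sup {ratio_val (norm u) (norm v) | u v.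
            (u, v) \<in> limiting_normal_cone (graph S) (x0, y0) \<and> u \<in> tangent_space X x0}"
proof -
  define T where "T = tangent_space X x0"
  define N where "N = limiting_normal_cone (graph S) (x0, y0)"
  have y0S: "y0 \<in> S x0" and x0X: "x0 \<in> X" using ingraph dom by (auto simp: graph_def)
  note chords = submanifold_tangent_geometry(1)[OF manifold x0X, folded T_def]
  note attainable = submanifold_tangent_geometry(2)[OF manifold x0X, folded T_def]
  have H_mem: "z \<in> H w \<longleftrightarrow> (z, - w) \<in> N \<and> z \<in> T" for w z
    using H_def by (simp add: coderivative_def N_def T_def)
  have "\<exists>V W \<kappa>. open V \<and> x0 \<in> V \<and> open W \<and> y0 \<in> W \<and> \<kappa> \<ge> 0 \<and> aubin_inclusion S X V W \<kappa>"
    using aubin_of_criterion[OF dom lclosed chords] H0 H_mem[of _ 0] by (auto simp: N_def)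
  then have aubin: "aubin_rel S X x0 y0" using x0X y0S lclosed by (simp add: aubin_rel_def)
  have "graphical_modulus S X x0 y0 = Sup {ratio_val (norm u) (norm v) | u v. (u, v) \<in> N \<and> u \<in> T}"
    unfolding graphical_modulus_def
  proof (rule Inf_admissible_eq_Sup_ratio)
    show "(0, 0) \<in> N \<and> 0 \<in> T" using H0 H_mem[of 0 0] by simp
    show "norm u \<le> \<kappa> * norm v" if "\<kappa> \<ge> 0" "\<exists>V W. open V \<and> x0 \<in> V \<and> open W \<and> y0 \<in> W \<and>
        aubin_inclusion S X V W \<kappa>" "(u, v) \<in> N \<and> u \<in> T" for \<kappa> u v
      using that aubin_bounds_tangential_normals[OF dom attainable] by (cases "u = 0") (auto simp: N_def)
    show "\<exists>V W. open V \<and> x0 \<in> V \<and> open W \<and> y0 \<in> W \<and> aubin_inclusion S X V W K"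
      if "c \<ge> 0" "\<And>u v. (u, v) \<in> N \<and> u \<in> T \<Longrightarrow> norm u \<le> c * norm v" "K > c" for c K
      using aubin_modulus_upper[OF dom lclosed chords, of c K] that by (auto simp: N_def)
  qed
  moreover have "outer_norm H = Sup {ratio_val (norm u) (norm v) | u v. (u, v) \<in> N \<and> u \<in> T}"
    using H_mem by (rule outer_norm_restricted_coderivative)
  ultimately show ?thesis using aubin by (simp add: N_def T_def)
qed

end
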